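(* Let $q$ be a prime power, $n\ge 1$ an integer, $P\in\mathbb F_q[\theta]$ nonzero and $\mathfrak P\in\mathbb F_q[\theta]$ irreducible. Then the following identities hold in the relevant rings of power series in $U$ (with the indicated substitutions for $T$ and $U$): 1. For $d\in\mathbb F_q$: $L_{\mathfrak P(\theta+d)}(\mathfrak C^n_{P(\theta+d)},T-d,U)=L_{\mathfrak P}(\mathfrak C^n_P,T,U)$. 2. For $c\in\mathbb F_q^*$: $L_{\mathfrak P(c\theta)}(\mathfrak C^n_{P(c\theta)},c^{-1}T,c^nU)=L_{\mathfrak P}(\mathfrak C^n_P,T,U)$. 3. If $\mathfrak P$ is not an associate of $\theta$, $m\ge\deg P$ is an integer with $m\equiv -n \pmod{q-1}$, $\iota(P):=\theta^mP(1/\theta)$ and $\iota(\mathfrak P):=\theta^{\deg\mathfrak P}\mathfrak P(1/\theta)$, then $L_{\iota(\mathfrak P)}(\mathfrak C^n_{\iota(P)},T^{-1},(-T)^nU)=L_{\mathfrak P}(\mathfrak C^n_P,T,U)$. 4. For $c\in\overline{\mathbb F}_q$ with $c^n\in\mathbb F_q^*$: $L_{\mathfrak P}(\mathfrak C^n_{c^{-n}P},T,c^nU)=L_{\mathfrak P}(\mathfrak C^n_P,T,U)$. 5. For every integer $k\ge 0$: $L_{\mathfrak P}(\mathfrak C^{q^kn}_P,T,U)=L_{\mathfrak P}(\mathfrak C^n_P,T^{q^k},U)$.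
   Context: Let $q$ be a prime power and $\theta,T$ independent variables. For nonzero $P\in\mathbb F_q[\theta]$ and an integer $n\ge1$, $\mathfrak C^n_P$ denotes the twisted $n$-th tensor power of the Carlitz module: the Anderson T-motive over $\mathbb F_q(\theta)$ which is free of rank $1$ over $\mathbb F_q(\theta)[T]$ with a basis element $e$, where $\tau$ acts semilinearly ($\tau(\theta x)=\theta^q\tau(x)$, $\tau(Tx)=T\tau(x)$) with $\tau e=P(T-\theta)^ne$. For an irreducible $\mathfrak P\in\mathbb F_q[\theta]$ of degree $d$, let $\tilde Q\in(\mathbb F_q[\theta]/\mathfrak P)[T]$ be the reduction of $P(T-\theta)^n$ modulo $\mathfrak P$; for $a=\sum_i c_iT^i$ with $c_i\in\mathbb F_q[\theta]/\mathfrak P$ put $a^{(k)}=\sum_i c_i^{q^k}T^i$, and $\tilde Q^{[d]}=\tilde Q^{(d-1)}\cdots\tilde Q^{(1)}\tilde Q$, which lies in $\mathbb F_q[T]$. The local $L$-factor is $L_{\mathfrak P}(\mathfrak C^n_P,T,U)=(1-\tilde Q^{[d]}U^d)^{-1}\in\mathbb F_q[T][[U]]$; it depends only on the ideal $(\mathfrak P)$. The notation $L_{\mathfrak P}(\mathfrak C^n_P,f(T),g(T)U)$ means this power series with $T$ replaced by $f(T)$ and $U$ by $g(T)U$. *)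

theory Defs
  imports "HOL-Library.Cardinality" "HOL-Computational_Algebra.Polynomial" "HOL-Computational_Algebra.Formal_Power_Series" "HOL-Number_Theory.Cong" "HOL-Computational_Algebra.Fraction_Field"
begin

(* F_q is a finite field type 'a; q = CARD('a).
   Polynomials in theta: 'a poly.  Polynomials in T with coefficients in F_q[theta]: 'a poly poly.
   Elements of F_q[theta]/P are represented by 'a poly representatives, reduced "mod P". *)

(* The polynomial P (T - theta)^n, as a polynomial in T with coefficients in F_q[theta]. *)
definition twistQ :: "'a::field poly \<Rightarrow> nat \<Rightarrow> 'a poly poly" where
  "twistQ P n = [:P:] * [: - [:0, 1:], 1 :] ^ n"

(* Q~^(k): reduce mod the prime and raise the coefficients to the q^k-th power *)
definition frob_red :: "'a::{finite,field} poly \<Rightarrow> nat \<Rightarrow> 'a poly poly \<Rightarrow> 'a poly poly" where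
  "frob_red Pr k Q = map_poly (\<lambda>c. (c ^ (CARD('a) ^ k)) mod Pr) Q"

(* Q~^[d] = Q~^(d-1) ... Q~^(1) Q~, d = deg Pr, computed in (F_q[theta]/Pr)[T] *)
definition Qd_res :: "'a::{finite,field} poly \<Rightarrow> nat \<Rightarrow> 'a poly \<Rightarrow> 'a poly poly" where
  "Qd_res Pr n P = map_poly (\<lambda>c. c mod Pr)
      (\<Prod>k<degree Pr. frob_red Pr k (twistQ P n))"

(* Q~^[d] viewed in F_q[T] (its coefficients are residues of constants, i.e. lie in F_q) *)
definition Qd :: "'a::{finite,field} poly \<Rightarrow> nat \<Rightarrow> 'a poly \<Rightarrow> 'a poly" where
  "Qd Pr n P = map_poly (\<lambda>c. coeff c 0) (Qd_res Pr n P)"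

(* L_Pr(C^n_P, T, U) = (1 - Q~^[d] U^d)^{-1} = sum_j (Q~^[d])^j U^(d j)  in F_q[T][[U]] *)
definition Lfac :: "'a::{finite,field} poly \<Rightarrow> nat \<Rightarrow> 'a poly \<Rightarrow> 'a poly fps" where
  "Lfac Pr n P = Abs_fps (\<lambda>i. if degree Pr dvd i then (Qd Pr n P) ^ (i div degree Pr) else 0)"

(* F_q(T) as the fraction field of F_q[T] *)
definition Tfr :: "'a::field poly fract" where
  "Tfr = Fract [:0, 1:] 1"

definition constfr :: "'a::field \<Rightarrow> 'a poly fract" where
  "constfr a = Fract [:a:] 1"

(* substitution T := f(T), U := g(T) U in a power series over F_q[T];
   result is a power series over F_q(T) *)
definition fps_subst_TU :: "'a::field poly fps \<Rightarrow> 'a poly fract \<Rightarrow> 'a poly fract \<Rightarrow> 'a poly fract fps" where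
  "fps_subst_TU F f g = Abs_fps (\<lambda>i. poly (map_poly constfr (fps_nth F i)) f * g ^ i)"

definition Lsub :: "'a::{finite,field} poly \<Rightarrow> nat \<Rightarrow> 'a poly \<Rightarrow> 'a poly fract \<Rightarrow> 'a poly fract \<Rightarrow> 'a poly fract fps" where
  "Lsub Pr n P f g = fps_subst_TU (Lfac Pr n P) f g"

(* iota_m(P) = theta^m P(1/theta), for m \<ge> deg P *)
definition iota :: "nat \<Rightarrow> 'a::field poly \<Rightarrow> 'a poly" where
  "iota m P = (\<Sum>i\<le>degree P. monom (coeff P i) (m - i))"

definition is_field_hom :: "('a::field \<Rightarrow> 'b::field) \<Rightarrow> bool" where
  "is_field_hom h \<longleftrightarrow> h 0 = 0 \<and> h 1 = 1 \<and> (\<forall>x y. h (x + y) = h x + h y \<and> h (x * y) = h x * h y)"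

end

(* The local factor is (1 - Q^[d] U^d)^-1, so each identity is an identity between the
   polynomials Q^[d] in F_q[T].  Modulo Pr, Q^[d] is the Frobenius norm Q^(0) Q^(1) ... Q^(d-1)
   of Q = P (T - theta)^n; since theta^(q^d) = theta modulo Pr, this norm is Frobenius-invariant
   and so has constant coefficients modulo Pr.  Hence a substitution theta |-> t identifying
   F_q[theta]/(Pr') with F_q[theta]/(Pr) carries Q^[d] at Pr' to the norm at Pr of the substituted
   twist.  For theta |-> theta - b, theta |-> theta / c and theta |-> 1/theta the substituted
   twist is the original one after an affine change of T (resp. a reversal in T) times a
   constant, which the norm raises to its d-th power; for theta |-> 1/theta that constant is a
   power of 1/theta of norm 1, because q - 1 divides m + n.  Finally (T - theta)^(q^k) =
   T^(q^k) - theta^(q^k), and the norm does not see the Frobenius twist of theta. *)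

theory Submission
  imports Defs "HOL-Algebra.Sylow" "HOL-Algebra.Multiplicative_Group"
    "HOL-Computational_Algebra.Polynomial_Factorial"
begin

hide_const (open) up_ring.coeff up_ring.monom module.smult

section \<open>Ring homomorphisms\<close>

definition is_ring_hom :: "('a::comm_ring_1 \<Rightarrow> 'b::comm_ring_1) \<Rightarrow> bool" where
  "is_ring_hom h \<longleftrightarrow> h 0 = 0 \<and> h 1 = 1 \<and> (\<forall>x y. h (x + y) = h x + h y \<and> h (x * y) = h x * h y)"

context
  fixes h :: "'a::comm_ring_1 \<Rightarrow> 'b::comm_ring_1"
  assumes hom: "is_ring_hom h"
begin

lemma ring_hom_zero: "h 0 = 0"
  and ring_hom_one: "h 1 = 1"
  and ring_hom_plus: "h (x + y) = h x + h y"
  and ring_hom_times: "h (x * y) = h x * h y"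
  using hom unfolding is_ring_hom_def by auto

lemma ring_hom_uminus: "h (- x) = - h x"
  using ring_hom_plus[of "- x" x] by (simp add: ring_hom_zero eq_neg_iff_add_eq_0)

lemma ring_hom_minus: "h (x - y) = h x - h y"
  using ring_hom_plus[of x "- y"] by (simp add: ring_hom_uminus)

lemma ring_hom_sum: "h (sum f A) = (\<Sum>a\<in>A. h (f a))"
  by (induction A rule: infinite_finite_induct) (auto simp: ring_hom_zero ring_hom_plus)

lemma ring_hom_prod: "h (prod f A) = (\<Prod>a\<in>A. h (f a))"
  by (induction A rule: infinite_finite_induct) (auto simp: ring_hom_one ring_hom_times)

lemma ring_hom_power: "h (x ^ n) = h x ^ n"
  by (induction n) (auto simp: ring_hom_one ring_hom_times)

lemma map_poly_ring_hom_plus: "map_poly h (p + q) = map_poly h p + map_poly h q"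
  by (rule poly_eqI) (simp add: coeff_map_poly ring_hom_zero ring_hom_plus)

lemma map_poly_ring_hom_times: "map_poly h (p * q) = map_poly h p * map_poly h q"
  by (rule poly_eqI) (simp add: coeff_map_poly ring_hom_zero coeff_mult ring_hom_sum ring_hom_times)

lemma is_ring_hom_map_poly: "is_ring_hom (map_poly h)"
  unfolding is_ring_hom_def
  by (simp add: map_poly_ring_hom_plus map_poly_ring_hom_times ring_hom_one)

lemma map_poly_ring_hom_const: "map_poly h [:a:] = [:h a:]"
  by (rule poly_eqI) (simp add: coeff_map_poly ring_hom_zero coeff_pCons split: nat.splits)

lemma map_poly_ring_hom_pcompose: "map_poly h (pcompose p q) = pcompose (map_poly h p) (map_poly h q)"
  by (induction p)
    (simp_all add: ring_hom_zero map_poly_pCons pcompose_pCons map_poly_ring_hom_plus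
      map_poly_ring_hom_times map_poly_ring_hom_const)

end

lemma is_ring_hom_const_poly: "is_ring_hom (\<lambda>a. [:a:])"
  unfolding is_ring_hom_def by (auto simp: one_pCons)

lemma is_ring_hom_pcompose: "is_ring_hom (\<lambda>p. pcompose p q)"
  unfolding is_ring_hom_def by (auto simp: pcompose_add pcompose_mult pcompose_1)

lemma ring_hom_cong:
  fixes h :: "'a::field poly \<Rightarrow> 'a poly"
  assumes "is_ring_hom h" and "M dvd h N" and "[x = y] (mod N)"
  shows "[h x = h y] (mod M)"
proof -
  obtain k where "x - y = N * k"
    using \<open>[x = y] (mod N)\<close> by (auto simp: cong_iff_dvd_diff elim: dvdE)
  then have "h x - h y = h N * h k"
    by (metis assms(1) ring_hom_minus ring_hom_times)
  then show ?thesis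
    using \<open>M dvd h N\<close> by (simp add: cong_iff_dvd_diff)
qed

lemma pcompose_power: "pcompose (p ^ n) q = pcompose p q ^ n"
  by (induction n) (simp_all add: pcompose_mult pcompose_1)

abbreviation lift_coeffs :: "'a::comm_ring_1 poly \<Rightarrow> 'a poly poly" where
  "lift_coeffs \<equiv> map_poly (\<lambda>a. [:a:])"

lemma is_ring_hom_lift_coeffs: "is_ring_hom lift_coeffs"
  by (rule is_ring_hom_map_poly[OF is_ring_hom_const_poly])

lemma lift_coeffs_const: "lift_coeffs [:a:] = [:[:a:]:]"
  by (rule map_poly_ring_hom_const[OF is_ring_hom_const_poly])

abbreviation theta :: "'a::comm_ring_1 poly" where
  "theta \<equiv> [:0, 1:]"

section \<open>Finite fields\<close>

lemma prime_CHAR_finite_field: "prime CHAR('a::{finite,field})"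
  using prime_CHAR_semidom[where ?'a='a] finite_imp_CHAR_pos[where ?'a='a] by auto

lemma card_ge_2: "CARD('a::{finite,field}) \<ge> 2"
proof -
  have "card {0, 1::'a} \<le> CARD('a)"
    by (intro card_mono) auto
  then show ?thesis by simp
qed

text \<open>Sylow (Cauchy) gives an element of additive order \<open>l\<close>, so \<open>l = 0\<close> in \<open>'a\<close>.\<close>
lemma prime_dvd_CARD_imp_eq_CHAR:
  assumes l: "prime l" and dvd: "l dvd CARD('a::{finite,field})"
  shows "l = CHAR('a)"
proof -
  define G where "G = \<lparr>carrier = (UNIV :: 'a set), monoid.mult = (+), one = (0 :: 'a)\<rparr>"
  have G_pow: "x [^]\<^bsub>\<lparr>carrier = C, monoid.mult = (+), one = 0\<rparr>\<^esub> (k::nat) = of_nat k * x"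
    for C and x :: 'a and k
    by (induction k) (auto simp: nat_pow_def algebra_simps)
  interpret group G
  proof (rule groupI)
    show "\<exists>y\<in>carrier G. y \<otimes>\<^bsub>G\<^esub> x = \<one>\<^bsub>G\<^esub>" for x
      by (intro bexI[of _ "- x"]) (auto simp: G_def)
  qed (auto simp: G_def add_ac)
  obtain m where "CARD('a) = l * m" using dvd by (elim dvdE)
  then have "order G = l ^ 1 * m" by (simp add: order_def G_def)
  from sylow_thm[OF l is_group this] obtain H where H: "subgroup H G" "card H = l ^ 1"
    by (auto simp: G_def)
  interpret H: group "G\<lparr>carrier := H\<rparr>"
    using subgroup.subgroup_is_group[OF H(1) is_group] .
  have "H \<noteq> {0}" using H(2) l prime_ge_2_nat by auto
  moreover have "0 \<in> H" using subgroup.one_closed[OF H(1)] by (simp add: G_def)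
  ultimately obtain x where x: "x \<in> H" "x \<noteq> 0" by blast
  have "x [^]\<^bsub>G\<lparr>carrier := H\<rparr>\<^esub> order (G\<lparr>carrier := H\<rparr>) = \<one>\<^bsub>G\<lparr>carrier := H\<rparr>\<^esub>"
    using x by (intro H.pow_order_eq_1) simp
  then have "of_nat l * x = 0"
    using H(2) G_pow by (simp add: order_def G_def)
  then have "CHAR('a) dvd l"
    using x by (simp add: of_nat_eq_0_iff_char_dvd)
  then show ?thesis
    using l prime_CHAR_finite_field[where 'a='a] primes_dvd_imp_eq by metis
qed

lemma CARD_eq_CHAR_power: "\<exists>r. CARD('a::{finite,field}) = CHAR('a) ^ r"
proof -
  let ?p = "CHAR('a)" and ?q = "CARD('a::{finite,field})"
  obtain y where y: "?q = ?p ^ multiplicity ?p ?q * y" "\<not> ?p dvd y"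
  proof (rule multiplicity_decompose')
    show "?q \<noteq> 0" by simp
    show "\<not> is_unit ?p" using prime_CHAR_finite_field[where 'a='a] not_prime_unit by blast
  qed
  have "y = 1"
  proof (rule ccontr)
    assume "y \<noteq> 1"
    then obtain l where "prime l" "l dvd y" using prime_factor_nat by blast
    then have "l = ?p"
      using y(1) by (metis dvd_mult prime_dvd_CARD_imp_eq_CHAR)
    then show False using \<open>l dvd y\<close> y(2) by simp
  qed
  then show ?thesis using y(1) by auto
qed

lemma freshmans_dream_CARD_power:
  fixes x y :: "'b::comm_semiring_1"
  assumes "CHAR('b) = CHAR('a::{finite,field})"
  shows "(x + y) ^ (CARD('a) ^ k) = x ^ (CARD('a) ^ k) + y ^ (CARD('a) ^ k)"
proof -
  obtain r where "CARD('a) = CHAR('a) ^ r" using CARD_eq_CHAR_power by blast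
  then show ?thesis
    using prime_CHAR_finite_field[where 'a='a] assms
    by (intro freshmans_dream'[where n = "r * k"]) (auto simp: power_mult)
qed

section \<open>Fermat's little theorem modulo an irreducible polynomial\<close>

lemma prime_elem_dvd_prod_iff:
  fixes p :: "'a::comm_semiring_1"
  assumes "prime_elem p" and "finite A"
  shows "p dvd prod f A \<longleftrightarrow> (\<exists>x\<in>A. p dvd f x)"
  using assms(2)
  by (induction A rule: finite_induct)
    (auto simp: prime_elem_dvd_mult_iff[OF assms(1)] prime_elem_not_unit[OF assms(1)])

lemma degree_pos_if_irreducible:
  fixes Pr :: "'a::field poly"
  assumes "irreducible Pr"
  shows "degree Pr > 0"
  using assms is_unit_iff_degree[of Pr] by (auto simp: irreducible_def)

lemma eq_0_if_dvd_degree_less: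
  fixes Pr y :: "'a::field poly"
  assumes "degree y < degree Pr" and "Pr dvd y"
  shows "y = 0"
  using assms dvd_imp_degree_le[of Pr y] by auto

lemma card_degree_less:
  assumes "d > 0"
  shows "card {y :: 'a::{finite,field} poly. degree y < d} = CARD('a) ^ d"
proof -
  have "bij_betw Poly {xs :: 'a list. length xs = d} {y. degree y < d}"
  proof (rule bij_betw_byWitness[where f' = "\<lambda>y. map (coeff y) [0..<d]"])
    show "Poly ` {xs. length xs = d} \<subseteq> {y. degree y < d}"
      using assms by (auto intro!: degree_lessI simp: nth_default_beyond)
    show "(\<lambda>y. map (coeff y) [0..<d]) ` {y. degree y < d} \<subseteq> {xs. length xs = d}"
      by auto
    show "\<forall>xs\<in>{xs. length xs = d}. map (coeff (Poly xs)) [0..<d] = xs"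
      by (auto intro: nth_equalityI simp: nth_default_nth)
    show "\<forall>y\<in>{y. degree y < d}. Poly (map (coeff y) [0..<d]) = y"
      by (auto intro!: poly_eqI simp: nth_default_def coeff_eq_0)
  qed
  then have "card {y :: 'a poly. degree y < d} = card {xs :: 'a list. length xs = d}"
    by (simp add: bij_betw_same_card)
  then show ?thesis
    using card_lists_length_eq[of "UNIV :: 'a set" d] by simp
qed

definition nonzero_residues :: "'a::field poly \<Rightarrow> 'a poly set" where
  "nonzero_residues Pr = {y. degree y < degree Pr} - {0}"

lemma finite_nonzero_residues: "finite (nonzero_residues (Pr :: 'a::{finite,field} poly))"
proof (cases "degree Pr = 0")
  case False
  then have "card {y :: 'a poly. degree y < degree Pr} > 0"
    by (simp add: card_degree_less)
  then show ?thesis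
    unfolding nonzero_residues_def by (intro finite_Diff card_ge_0_finite)
qed (simp add: nonzero_residues_def)

lemma card_nonzero_residues:
  assumes "degree (Pr :: 'a::{finite,field} poly) > 0"
  shows "card (nonzero_residues Pr) = CARD('a) ^ degree Pr - 1"
  using assms by (simp add: nonzero_residues_def card_Diff_singleton card_degree_less)

lemma not_dvd_if_nonzero_residue: "y \<in> nonzero_residues Pr \<Longrightarrow> \<not> Pr dvd y"
  using eq_0_if_dvd_degree_less[of y Pr] by (auto simp: nonzero_residues_def)

lemma bij_betw_mult_mod_nonzero_residues:
  fixes Pr x :: "'a::{finite,field} poly"
  assumes prime: "prime_elem Pr" and x: "\<not> Pr dvd x"
  shows "bij_betw (\<lambda>y. (x * y) mod Pr) (nonzero_residues Pr) (nonzero_residues Pr)"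
proof -
  let ?h = "\<lambda>y. (x * y) mod Pr" and ?S = "nonzero_residues Pr"
  have "Pr \<noteq> 0"
    using prime by auto
  have "?h ` ?S \<subseteq> ?S"
  proof
    fix z assume "z \<in> ?h ` ?S"
    then obtain y where y: "y \<in> ?S" "z = ?h y" by blast
    then have "\<not> Pr dvd x * y"
      using x not_dvd_if_nonzero_residue prime_elem_dvd_mult_iff[OF prime] by blast
    then show "z \<in> ?S"
      using \<open>Pr \<noteq> 0\<close> degree_mod_less'[of Pr "x * y"]
      by (auto simp: nonzero_residues_def y(2) mod_eq_0_iff_dvd)
  qed
  moreover have "inj_on ?h ?S"
  proof (rule inj_onI)
    fix y1 y2 assume y: "y1 \<in> ?S" "y2 \<in> ?S" and "?h y1 = ?h y2"
    then have "Pr dvd x * (y1 - y2)"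
      by (simp add: right_diff_distrib mod_eq_dvd_iff)
    then have "Pr dvd y1 - y2"
      using x prime_elem_dvd_mult_iff[OF prime] by blast
    moreover have "degree (y1 - y2) < degree Pr"
      using y by (auto simp: nonzero_residues_def intro: le_less_trans[OF degree_diff_le_max])
    ultimately show "y1 = y2"
      using eq_0_if_dvd_degree_less by fastforce
  qed
  ultimately show ?thesis
    using finite_nonzero_residues[of Pr]
    by (simp add: bij_betw_def card_subset_eq card_image)
qed

text \<open>Fermat's little theorem in \<open>\<bbbF>\<^sub>q[\<theta>]/(Pr)\<close>: multiplying the \<open>q^d - 1\<close> nonzero
  residues by \<open>x\<close> permutes them, so it multiplies their product by \<open>x^(q^d - 1)\<close> without changing it.\<close>
lemma power_card_degree_minus_one_cong:
  fixes Pr x :: "'a::{finite,field} poly"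
  assumes irr: "irreducible Pr" and x: "\<not> Pr dvd x"
  shows "[x ^ (CARD('a) ^ degree Pr - 1) = 1] (mod Pr)"
proof -
  let ?S = "nonzero_residues Pr"
  have prime: "prime_elem Pr"
    by (rule field_poly_irreducible_imp_prime[OF irr])
  have "prod id ?S = (\<Prod>y\<in>?S. (x * y) mod Pr)"
    using prod.reindex_bij_betw[OF bij_betw_mult_mod_nonzero_residues[OF prime x], of id] by simp
  also have "[\<dots> = (\<Prod>y\<in>?S. x * y)] (mod Pr)"
    by (rule cong_prod) (simp add: cong_def)
  also have "(\<Prod>y\<in>?S. x * y) = x ^ card ?S * prod id ?S"
    by (simp add: prod.distrib)
  finally have "Pr dvd (x ^ card ?S - 1) * prod id ?S"
    by (simp add: cong_iff_dvd_diff algebra_simps dvd_diff_commute)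
  moreover have "\<not> Pr dvd prod id ?S"
    by (auto simp: prime_elem_dvd_prod_iff[OF prime finite_nonzero_residues]
        dest: not_dvd_if_nonzero_residue)
  ultimately have "Pr dvd x ^ card ?S - 1"
    using prime_elem_dvd_mult_iff[OF prime] by blast
  then show ?thesis
    using degree_pos_if_irreducible[OF irr] by (simp add: card_nonzero_residues cong_iff_dvd_diff)
qed

lemma power_card_degree_cong:
  fixes Pr x :: "'a::{finite,field} poly"
  assumes irr: "irreducible Pr"
  shows "[x ^ (CARD('a) ^ degree Pr) = x] (mod Pr)"
proof (cases "Pr dvd x")
  case True
  have "x dvd x ^ (CARD('a) ^ degree Pr)"
    by (rule dvd_power) simp
  with True have "Pr dvd x ^ (CARD('a) ^ degree Pr)"
    by (rule dvd_trans)
  then show ?thesis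
    using True by (simp add: cong_iff_dvd_diff)
next
  case False
  have "CARD('a) ^ degree Pr = Suc (CARD('a) ^ degree Pr - 1)" by simp
  then have "x ^ (CARD('a) ^ degree Pr) = x * x ^ (CARD('a) ^ degree Pr - 1)"
    by (metis power_Suc)
  also have "[\<dots> = x * 1] (mod Pr)"
    by (intro cong_mult cong_refl power_card_degree_minus_one_cong[OF irr False])
  finally show ?thesis by simp
qed

text \<open>Applied to \<open>Pr = \<theta>\<close>, the previous lemma gives Fermat's little theorem in \<open>\<bbbF>\<^sub>q \<cong> \<bbbF>\<^sub>q[\<theta>]/(\<theta>)\<close>.\<close>
lemma power_card_eq_self: "(a :: 'a::{finite,field}) ^ CARD('a) = a"
proof -
  have "irreducible (theta :: 'a poly)"
    by (rule irreducible_linear_field_poly) simp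
  from power_card_degree_cong[OF this, of "[:a:]"]
  have "[:a ^ CARD('a):] mod theta = [:a:] mod theta"
    by (simp add: cong_def poly_const_pow)
  then show ?thesis
    by (simp add: mod_poly_less)
qed

lemma power_card_power_eq_self: "(a :: 'a::{finite,field}) ^ (CARD('a) ^ k) = a"
  by (induction k) (simp_all add: power_card_eq_self power_mult flip: power_Suc2)

lemma prod_linear_factors_UNIV:
  "(\<Prod>a\<in>(UNIV :: 'a::{finite,field} set). [:- a, 1:]) = theta ^ CARD('a) - theta"
  (is "?L = ?R")
proof (rule poly_eqI_degree_lead_coeff[where n = "CARD('a)" and A = UNIV])
  have q: "CARD('a) \<ge> 2" by (rule card_ge_2)
  have "degree ?L = CARD('a)"
    by (subst degree_prod_eq_sum_degree) simp_all
  moreover have "lead_coeff ?L = 1" and "coeff ?R (CARD('a)) = 1"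
    using q by (simp_all add: lead_coeff_prod coeff_eq_0 coeff_linear_power)
  moreover have "degree ?R \<le> CARD('a)"
    using q by (intro degree_diff_le) (simp_all add: degree_linear_power)
  ultimately show "coeff ?L (CARD('a)) = coeff ?R (CARD('a))"
    and "degree ?L \<le> CARD('a)" and "degree ?R \<le> CARD('a)" by simp_all
  show "poly ?L z = poly ?R z" for z
    by (simp add: poly_prod power_card_eq_self)
qed simp

lemma power_card_minus_eq_prod:
  "(x :: 'a::{finite,field} poly) ^ CARD('a) - x = (\<Prod>a\<in>UNIV. x - [:a:])"
proof -
  have "pcompose (\<Prod>a\<in>(UNIV :: 'a set). [:- a, 1:]) x = (\<Prod>a\<in>UNIV. x - [:a:])"
    by (simp add: pcompose_prod pcompose_pCons add.commute diff_conv_add_uminus minus_pCons)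
  then show ?thesis
    by (simp add: prod_linear_factors_UNIV pcompose_diff pcompose_power pcompose_pCons)
qed

text \<open>A residue fixed by the Frobenius \<open>x \<mapsto> x\<^sup>q\<close> lies in \<open>\<bbbF>\<^sub>q\<close>, because \<open>x\<^sup>q - x = \<Prod>\<^sub>a (x - a)\<close>.\<close>
lemma mod_eq_const_if_power_card_cong:
  fixes Pr x :: "'a::{finite,field} poly"
  assumes irr: "irreducible Pr" and "[x ^ CARD('a) = x] (mod Pr)"
  shows "x mod Pr = [:coeff (x mod Pr) 0:]"
proof -
  have "Pr dvd (\<Prod>a\<in>UNIV. x - [:a:])"
    using assms(2) by (simp add: cong_iff_dvd_diff power_card_minus_eq_prod)
  then obtain a where "Pr dvd x - [:a:]"
    using prime_elem_dvd_prod_iff[OF field_poly_irreducible_imp_prime[OF irr] finite_class.finite_UNIV,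
        of "\<lambda>a. x - [:a:]"]
    by blast
  then have "x mod Pr = [:a:] mod Pr"
    by (simp add: mod_eq_dvd_iff)
  also have "\<dots> = [:a:]"
    using degree_pos_if_irreducible[OF irr] by (simp add: mod_poly_less)
  finally show ?thesis by simp
qed

section \<open>Frobenius norms\<close>

definition frob :: "nat \<Rightarrow> 'a::{finite,field} poly \<Rightarrow> 'a poly" where
  "frob k c = c ^ (CARD('a) ^ k)"

lemma is_ring_hom_frob: "is_ring_hom (frob k)"
  unfolding is_ring_hom_def frob_def
  by (auto simp: power_mult_distrib freshmans_dream_CARD_power[where 'a='a and 'b="'a poly"])

lemma frob_frob: "frob j (frob k c) = frob (j + k) c"
  by (simp add: frob_def power_add mult.commute flip: power_mult)

lemma frob_const: "frob k [:a:] = [:a:]"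
  by (simp add: frob_def poly_const_pow power_card_power_eq_self)

lemma map_poly_frob_frob: "map_poly (frob j) (map_poly (frob k) A) = map_poly (frob (j + k)) A"
  by (simp add: map_poly_map_poly ring_hom_zero[OF is_ring_hom_frob] o_def frob_frob)

lemma map_poly_frob_lift_coeffs: "map_poly (frob k) (lift_coeffs r) = lift_coeffs r"
  by (simp add: map_poly_map_poly ring_hom_zero[OF is_ring_hom_frob] o_def frob_const)

definition cong_coeffs :: "'a::field poly \<Rightarrow> 'a poly poly \<Rightarrow> 'a poly poly \<Rightarrow> bool" where
  "cong_coeffs Pr A B \<longleftrightarrow> [:Pr:] dvd A - B"

lemma cong_coeffs_iff: "cong_coeffs Pr A B \<longleftrightarrow> (\<forall>i. [coeff A i = coeff B i] (mod Pr))"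
  unfolding cong_coeffs_def const_poly_dvd_iff cong_iff_dvd_diff by simp

lemma cong_coeffs_refl [simp]: "cong_coeffs Pr A A"
  by (simp add: cong_coeffs_def)

lemma cong_coeffs_trans: "cong_coeffs Pr A B \<Longrightarrow> cong_coeffs Pr B C \<Longrightarrow> cong_coeffs Pr A C"
  by (auto simp: cong_coeffs_iff intro: cong_trans)

lemma cong_coeffs_mult:
  assumes "cong_coeffs Pr A B" and "cong_coeffs Pr C D"
  shows "cong_coeffs Pr (A * C) (B * D)"
proof -
  have "A * C - B * D = A * (C - D) + (A - B) * D"
    by (simp add: algebra_simps)
  then show ?thesis
    using assms unfolding cong_coeffs_def by (metis dvd_add dvd_mult dvd_mult2)
qed

lemma cong_coeffs_prod:
  "(\<And>x. x \<in> S \<Longrightarrow> cong_coeffs Pr (f x) (g x)) \<Longrightarrow> cong_coeffs Pr (prod f S) (prod g S)"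
  by (induction S rule: infinite_finite_induct) (auto intro: cong_coeffs_mult)

lemma cong_coeffs_power: "cong_coeffs Pr A B \<Longrightarrow> cong_coeffs Pr (A ^ n) (B ^ n)"
  by (induction n) (auto intro: cong_coeffs_mult)

lemma cong_coeffs_map_poly_frob:
  "cong_coeffs Pr A B \<Longrightarrow> cong_coeffs Pr (map_poly (frob k) A) (map_poly (frob k) B)"
  by (simp add: cong_coeffs_iff coeff_map_poly ring_hom_zero[OF is_ring_hom_frob] frob_def cong_pow)

lemma cong_coeffs_pcompose: "cong_coeffs Pr A B \<Longrightarrow> cong_coeffs Pr (pcompose A R) (pcompose B R)"
  unfolding cong_coeffs_def by (metis dvd_def pcompose_diff pcompose_mult pcompose_const)

lemma cong_coeffs_frob_red: "cong_coeffs Pr (frob_red Pr k Q) (map_poly (frob k) Q)"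
proof -
  have "CARD('a) ^ k \<noteq> 0" by simp
  then have "coeff (frob_red Pr k Q) i = coeff Q i ^ (CARD('a) ^ k) mod Pr" for i
    by (simp add: frob_red_def coeff_map_poly power_0_left)
  then show ?thesis
    by (simp add: cong_coeffs_iff coeff_map_poly frob_def cong_def ring_hom_zero[OF is_ring_hom_frob])
qed

definition frob_norm :: "nat \<Rightarrow> 'a::{finite,field} poly poly \<Rightarrow> 'a poly poly" where
  "frob_norm d Q = (\<Prod>k<d. map_poly (frob k) Q)"

lemma frob_norm_mult: "frob_norm d (A * B) = frob_norm d A * frob_norm d B"
  unfolding frob_norm_def
  by (simp add: map_poly_ring_hom_times[OF is_ring_hom_frob] prod.distrib)

lemma frob_norm_lift_coeffs: "frob_norm d (lift_coeffs s) = lift_coeffs (s ^ d)"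
  unfolding frob_norm_def by (simp add: map_poly_frob_lift_coeffs ring_hom_power[OF is_ring_hom_lift_coeffs])

lemma frob_norm_pcompose_lift_coeffs:
  "frob_norm d (pcompose X (lift_coeffs r)) = pcompose (frob_norm d X) (lift_coeffs r)"
  unfolding frob_norm_def
  by (simp add: map_poly_ring_hom_pcompose[OF is_ring_hom_frob] map_poly_frob_lift_coeffs pcompose_prod)

lemma cong_coeffs_frob_norm:
  "cong_coeffs Pr A B \<Longrightarrow> cong_coeffs Pr (frob_norm d A) (frob_norm d B)"
  unfolding frob_norm_def by (intro cong_coeffs_prod cong_coeffs_map_poly_frob)

lemma cong_coeffs_prod_shift:
  fixes g :: "nat \<Rightarrow> 'a::field poly poly"
  assumes periodic: "\<And>j. cong_coeffs Pr (g (j + d)) (g j)"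
  shows "cong_coeffs Pr (\<Prod>j<d. g (j + k)) (\<Prod>j<d. g j)"
proof (induction k)
  case (Suc k)
  show ?case
  proof (cases d)
    case (Suc d')
    have "(\<Prod>j<d. g (j + Suc k)) = (\<Prod>j<d'. g (Suc j + k)) * g (d + k)"
      by (simp add: Suc prod.lessThan_Suc)
    moreover have "(\<Prod>j<d. g (j + k)) = g k * (\<Prod>j<d'. g (Suc j + k))"
      by (simp add: Suc prod.lessThan_Suc_shift del: prod.lessThan_Suc)
    moreover have "cong_coeffs Pr (g (d + k)) (g k)"
      using periodic[of k] by (simp add: add.commute)
    ultimately have "cong_coeffs Pr (\<Prod>j<d. g (j + Suc k)) (\<Prod>j<d. g (j + k))"
      by (simp add: mult.commute cong_coeffs_mult)
    then show ?thesis
      using Suc.IH by (rule cong_coeffs_trans)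
  qed simp
qed simp

text \<open>By Fermat, \<open>frob\<close> has period \<open>deg Pr\<close> modulo \<open>Pr\<close>, so \<open>frob k\<close> permutes the factors cyclically.\<close>
lemma cong_coeffs_frob_norm_map_poly_frob:
  fixes Pr :: "'a::{finite,field} poly"
  assumes irr: "irreducible Pr"
  shows "cong_coeffs Pr (frob_norm (degree Pr) (map_poly (frob k) Q)) (frob_norm (degree Pr) Q)"
  unfolding frob_norm_def map_poly_frob_frob
proof (rule cong_coeffs_prod_shift)
  fix j
  have "cong_coeffs Pr (map_poly (frob (degree Pr)) Q) Q"
    using power_card_degree_cong[OF irr]
    by (simp add: cong_coeffs_iff coeff_map_poly ring_hom_zero[OF is_ring_hom_frob] frob_def)
  from cong_coeffs_map_poly_frob[OF this, of j]
  show "cong_coeffs Pr (map_poly (frob (j + degree Pr)) Q) (map_poly (frob j) Q)"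
    by (simp add: map_poly_frob_frob)
qed

definition const_residue :: "'a::field poly \<Rightarrow> 'a poly \<Rightarrow> 'a" where
  "const_residue Pr c = coeff (c mod Pr) 0"

lemma const_residue_0 [simp]: "const_residue Pr 0 = 0"
  by (simp add: const_residue_def)

lemma const_residue_add: "const_residue Pr (x + y) = const_residue Pr x + const_residue Pr y"
  by (simp add: const_residue_def poly_mod_add_left)

lemma const_residue_sum: "const_residue Pr (sum f S) = (\<Sum>s\<in>S. const_residue Pr (f s))"
  by (induction S rule: infinite_finite_induct) (auto simp: const_residue_add)

lemma const_residue_smult: "const_residue Pr (smult a x) = const_residue Pr x * a"
  by (simp add: const_residue_def mod_smult_left)

lemma const_residue_cong: "[x = y] (mod Pr) \<Longrightarrow> const_residue Pr x = const_residue Pr y"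
  by (simp add: const_residue_def cong_def)

lemma map_poly_const_residue_cong:
  "cong_coeffs Pr A B \<Longrightarrow> map_poly (const_residue Pr) A = map_poly (const_residue Pr) B"
  by (intro poly_eqI) (simp add: cong_coeffs_iff coeff_map_poly const_residue_cong)

lemma map_poly_const_residue_mult_lift_coeffs:
  "map_poly (const_residue Pr) (A * lift_coeffs r) = map_poly (const_residue Pr) A * r"
  by (rule poly_eqI)
    (simp add: coeff_map_poly coeff_mult const_residue_sum const_residue_smult)

lemma map_poly_const_residue_pcompose_lift_coeffs:
  "map_poly (const_residue Pr) (pcompose A (lift_coeffs r)) = pcompose (map_poly (const_residue Pr) A) r"
proof (induction A)
  case (pCons a A)
  have "map_poly (const_residue Pr) ([:a:] + lift_coeffs r * pcompose A (lift_coeffs r))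
      = [:const_residue Pr a:] + pcompose (map_poly (const_residue Pr) A) r * r"
    by (rule poly_eqI)
      (simp add: pCons.IH[symmetric] coeff_map_poly const_residue_add mult.commute[of "lift_coeffs r"]
        map_poly_const_residue_mult_lift_coeffs[symmetric] coeff_pCons split: nat.split)
  then show ?case
    by (simp add: pcompose_pCons map_poly_pCons mult.commute)
qed simp

lemma map_poly_const_residue_frob_norm_subst:
  "map_poly (const_residue Pr) (frob_norm d (pcompose X (lift_coeffs r) * lift_coeffs s))
     = pcompose (map_poly (const_residue Pr) (frob_norm d X)) r * s ^ d"
  by (simp add: frob_norm_mult frob_norm_pcompose_lift_coeffs frob_norm_lift_coeffs
      map_poly_const_residue_mult_lift_coeffs map_poly_const_residue_pcompose_lift_coeffs)

lemma Qd_eq_const_residue_frob_norm: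
  "Qd Pr n P = map_poly (const_residue Pr) (frob_norm (degree Pr) (twistQ P n))"
proof -
  have "Qd Pr n P = map_poly (const_residue Pr) (\<Prod>k<degree Pr. frob_red Pr k (twistQ P n))"
    unfolding Qd_def Qd_res_def const_residue_def[abs_def] by (simp add: map_poly_map_poly o_def)
  also have "\<dots> = map_poly (const_residue Pr) (frob_norm (degree Pr) (twistQ P n))"
    unfolding frob_norm_def
    by (intro map_poly_const_residue_cong cong_coeffs_prod cong_coeffs_frob_red)
  finally show ?thesis .
qed

section \<open>Transport along substitutions in \<open>\<theta>\<close>\<close>

text \<open>The norm is Frobenius-invariant modulo \<open>Pr\<close>, so its coefficients are constants modulo \<open>Pr\<close>.\<close>
lemma frob_norm_coeff_mod_eq_const:
  fixes Pr :: "'a::{finite,field} poly"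
  assumes irr: "irreducible Pr"
  shows "coeff (frob_norm (degree Pr) Q) i mod Pr
           = [:const_residue Pr (coeff (frob_norm (degree Pr) Q) i):]"
proof -
  let ?N = "frob_norm (degree Pr) Q"
  have "map_poly (frob 1) ?N = frob_norm (degree Pr) (map_poly (frob 1) Q)"
    unfolding frob_norm_def
    by (simp add: ring_hom_prod[OF is_ring_hom_map_poly[OF is_ring_hom_frob]] map_poly_frob_frob
        add.commute)
  then have "cong_coeffs Pr (map_poly (frob 1) ?N) ?N"
    using cong_coeffs_frob_norm_map_poly_frob[OF irr, of 1 Q] by simp
  then have "[coeff ?N i ^ CARD('a) = coeff ?N i] (mod Pr)"
    by (simp add: cong_coeffs_iff coeff_map_poly ring_hom_zero[OF is_ring_hom_frob] frob_def)
  then show ?thesis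
    unfolding const_residue_def by (rule mod_eq_const_if_power_card_cong[OF irr])
qed

lemma map_poly_ring_hom_frob:
  fixes \<phi> :: "'a::{finite,field} poly \<Rightarrow> 'a poly"
  assumes "is_ring_hom \<phi>"
  shows "map_poly \<phi> (map_poly (frob k) Q) = map_poly (frob k) (map_poly \<phi> Q)"
  using assms
  by (simp add: map_poly_map_poly ring_hom_zero is_ring_hom_frob o_def frob_def ring_hom_power)

text \<open>A ring endomorphism \<open>\<phi>\<close> of \<open>\<bbbF>\<^sub>q[\<theta>]\<close> fixing \<open>\<bbbF>\<^sub>q\<close> and inducing an isomorphism
  \<open>\<bbbF>\<^sub>q[\<theta>]/(Pr') \<cong> \<bbbF>\<^sub>q[\<theta>]/(Pr)\<close> transports the local factor at \<open>Pr'\<close> to \<open>Pr\<close>.\<close>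
lemma Qd_transport:
  fixes \<phi> :: "'a::{finite,field} poly \<Rightarrow> 'a poly"
  assumes irr: "irreducible Pr" and \<phi>: "is_ring_hom \<phi>" and \<phi>_const: "\<And>a. \<phi> [:a:] = [:a:]"
    and deg: "degree Pr' = degree Pr" and dvd: "Pr dvd \<phi> Pr'"
    and inj: "\<And>z. degree z < degree Pr \<Longrightarrow> Pr dvd \<phi> z \<Longrightarrow> z = 0"
  shows "Qd Pr' n P' = map_poly (const_residue Pr) (frob_norm (degree Pr) (map_poly \<phi> (twistQ P' n)))"
  unfolding Qd_eq_const_residue_frob_norm deg
proof (rule poly_eqI)
  fix i
  let ?N = "frob_norm (degree Pr)" and ?Q = "twistQ P' n"
  define c where "c = coeff (?N ?Q) i"
  define a where "a = const_residue Pr (\<phi> c)"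
  have "map_poly \<phi> (?N ?Q) = ?N (map_poly \<phi> ?Q)"
    unfolding frob_norm_def
    by (simp add: ring_hom_prod[OF is_ring_hom_map_poly[OF \<phi>]] map_poly_ring_hom_frob[OF \<phi>])
  then have "coeff (?N (map_poly \<phi> ?Q)) i = \<phi> c"
    by (metis c_def coeff_map_poly ring_hom_zero[OF \<phi>])
  then have "[\<phi> c = [:a:]] (mod Pr)"
    using frob_norm_coeff_mod_eq_const[OF irr, of "map_poly \<phi> ?Q" i] degree_pos_if_irreducible[OF irr]
    by (simp add: a_def cong_def mod_poly_less)
  moreover have "[\<phi> (c mod Pr') = \<phi> c] (mod Pr)"
    by (rule ring_hom_cong[OF \<phi> dvd]) (simp add: cong_def)
  ultimately have "Pr dvd \<phi> (c mod Pr' - [:a:])"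
    by (simp add: ring_hom_minus[OF \<phi>] \<phi>_const cong_iff_dvd_diff flip: cong_def)
      (metis cong_def cong_iff_dvd_diff cong_trans)
  moreover have "degree (c mod Pr' - [:a:]) < degree Pr"
  proof -
    have "Pr' \<noteq> 0"
      using deg degree_pos_if_irreducible[OF irr] by auto
    then have "degree (c mod Pr') < degree Pr"
      using deg degree_pos_if_irreducible[OF irr] degree_mod_less'[of Pr' c]
      by (cases "c mod Pr' = 0") auto
    then show ?thesis
      using degree_pos_if_irreducible[OF irr] by (auto intro: degree_diff_less)
  qed
  ultimately have "c mod Pr' = [:a:]"
    using inj by fastforce
  then show "coeff (map_poly (const_residue Pr') (?N ?Q)) i
      = coeff (map_poly (const_residue Pr) (?N (map_poly \<phi> ?Q))) i"
    using \<open>coeff (?N (map_poly \<phi> ?Q)) i = \<phi> c\<close>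
    by (simp add: coeff_map_poly const_residue_def c_def a_def)
qed

lemma map_poly_twistQ:
  assumes "is_ring_hom \<phi>"
  shows "map_poly \<phi> (twistQ P n) = [:\<phi> P:] * [:- \<phi> theta, 1:] ^ n"
proof -
  have lin: "map_poly \<phi> [:c, 1:] = [:\<phi> c, 1:]" for c
    using assms by (simp add: map_poly_pCons ring_hom_zero ring_hom_one)
  show ?thesis
    unfolding twistQ_def map_poly_ring_hom_times[OF assms] ring_hom_power[OF is_ring_hom_map_poly[OF assms]]
      map_poly_ring_hom_const[OF assms] lin ring_hom_uminus[OF assms] ..
qed

lemma pcompose_twistQ: "pcompose (twistQ P n) R = [:P:] * ([:- theta:] + R) ^ n"
proof -
  have "pcompose [:c, 1:] R = [:c:] + R" for c :: "'a poly"
    by (simp add: pcompose_pCons)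
  then show ?thesis
    unfolding twistQ_def pcompose_mult pcompose_power pcompose_const by simp
qed

lemma Qd_pcompose_affine:
  fixes Pr P :: "'a::{finite,field} poly"
  assumes irr: "irreducible Pr" and c: "c \<noteq> 0"
  shows "Qd (pcompose Pr [:b, c:]) n (pcompose P [:b, c:])
           = pcompose (Qd Pr n P) [:b, c:] * [:inverse c ^ n:] ^ degree Pr"
proof -
  define t where "t = [:- b / c, inverse c:]"
  have t: "pcompose [:b, c:] t = theta"
    using c by (simp add: t_def pcompose_pCons field_simps)
  have deg_t: "degree t = 1"
    using c by (simp add: t_def)
  have "Qd (pcompose Pr [:b, c:]) n (pcompose P [:b, c:])
      = map_poly (const_residue Pr) (frob_norm (degree Pr)
          (map_poly (\<lambda>p. pcompose p t) (twistQ (pcompose P [:b, c:]) n)))"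
  proof (rule Qd_transport[OF irr is_ring_hom_pcompose])
    show "degree (pcompose Pr [:b, c:]) = degree Pr"
      using c by (simp add: degree_pcompose)
    show "Pr dvd pcompose (pcompose Pr [:b, c:]) t"
      by (simp add: t flip: pcompose_assoc)
    show "z = 0" if "degree z < degree Pr" and "Pr dvd pcompose z t" for z
      using that eq_0_if_dvd_degree_less[of "pcompose z t" Pr] pcompose_eq_0[of z t]
      by (simp add: degree_pcompose deg_t)
  qed simp
  also have "map_poly (\<lambda>p. pcompose p t) (twistQ (pcompose P [:b, c:]) n)
      = pcompose (twistQ P n) (lift_coeffs [:b, c:]) * lift_coeffs ([:inverse c:] ^ n)"
  proof -
    have "pcompose (pcompose P [:b, c:]) t = P"
      by (simp add: t flip: pcompose_assoc)
    moreover have "pcompose theta t = t"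
      by (simp add: pcompose_pCons)
    moreover have "[:- t, 1:] = ([:- theta:] + lift_coeffs [:b, c:]) * lift_coeffs [:inverse c:]"
      using c by (simp add: t_def map_poly_pCons field_simps)
    ultimately show ?thesis
      unfolding map_poly_twistQ[OF is_ring_hom_pcompose] pcompose_twistQ
        ring_hom_power[OF is_ring_hom_lift_coeffs]
      by (simp only: power_mult_distrib mult.assoc)
  qed
  finally show ?thesis
    by (simp add: map_poly_const_residue_frob_norm_subst Qd_eq_const_residue_frob_norm
        poly_const_pow flip: power_mult)
qed

lemma Qd_smult: "Qd Pr n (smult a P) = Qd Pr n P * [:a:] ^ degree Pr"
proof -
  have lift_theta: "lift_coeffs theta = theta"
    by (simp add: map_poly_pCons)
  have "twistQ (smult a P) n = pcompose (twistQ P n) (lift_coeffs theta) * lift_coeffs [:a:]"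
    unfolding lift_theta lift_coeffs_const twistQ_def pcompose_idR by (simp add: mult_ac)
  then show ?thesis
    by (simp add: Qd_eq_const_residue_frob_norm map_poly_const_residue_frob_norm_subst)
qed

lemma Qd_CARD_power_mult:
  fixes Pr P :: "'a::{finite,field} poly"
  assumes irr: "irreducible Pr"
  shows "Qd Pr (CARD('a) ^ k * n) P = pcompose (Qd Pr n P) (monom 1 (CARD('a) ^ k))"
proof -
  let ?N = "CARD('a) ^ k" and ?d = "degree Pr"
  let ?S = "[:- theta, 1:] :: 'a poly poly"
  have "?S ^ ?N = ([:- theta:] + monom 1 1) ^ ?N"
    by (simp add: monom_Suc one_pCons[symmetric])
  also have "\<dots> = [:- theta:] ^ ?N + monom 1 1 ^ ?N"
    by (rule freshmans_dream_CARD_power) simp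
  also have "\<dots> = pcompose (map_poly (frob k) ?S) (monom 1 ?N)"
  proof -
    have "map_poly (frob k) ?S = [:frob k (- theta), 1:]"
      by (rule poly_eqI) (simp add: coeff_map_poly coeff_pCons frob_def split: nat.split)
    then show ?thesis
      by (simp add: pcompose_pCons poly_const_pow frob_def monom_power)
  qed
  finally have S: "?S ^ ?N = pcompose (map_poly (frob k) ?S) (monom 1 ?N)" .
  have "lift_coeffs (monom 1 ?N) = (monom 1 ?N :: 'a poly poly)"
    by (simp add: map_poly_monom one_pCons[symmetric])
  then have twist: "twistQ P (?N * n)
      = pcompose ([:P:] * map_poly (frob k) (?S ^ n)) (lift_coeffs (monom 1 ?N))"
    unfolding twistQ_def power_mult S pcompose_mult pcompose_const pcompose_power
      ring_hom_power[OF is_ring_hom_map_poly[OF is_ring_hom_frob]] by simp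
  have "cong_coeffs Pr (frob_norm ?d ([:P:] * map_poly (frob k) (?S ^ n)))
      (frob_norm ?d (twistQ P n))"
    unfolding twistQ_def frob_norm_mult
    by (intro cong_coeffs_mult cong_coeffs_refl cong_coeffs_frob_norm_map_poly_frob[OF irr])
  then have "map_poly (const_residue Pr) (frob_norm ?d (twistQ P (?N * n)))
      = map_poly (const_residue Pr) (pcompose (frob_norm ?d (twistQ P n)) (lift_coeffs (monom 1 ?N)))"
    unfolding twist frob_norm_pcompose_lift_coeffs
    by (intro map_poly_const_residue_cong cong_coeffs_pcompose)
  then show ?thesis
    by (simp add: Qd_eq_const_residue_frob_norm map_poly_const_residue_pcompose_lift_coeffs)
qed

section \<open>Reversal of polynomials\<close>

text \<open>\<open>iota\<close> is only defined over fields; the reversal is also needed for polynomials in \<open>T\<close>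
  over \<open>\<bbbF>\<^sub>q[\<theta>]\<close>.\<close>
definition poly_reverse :: "nat \<Rightarrow> 'a::comm_ring_1 poly \<Rightarrow> 'a poly" where
  "poly_reverse N A = (\<Sum>i\<le>N. monom (coeff A i) (N - i))"

lemma coeff_poly_reverse: "coeff (poly_reverse N A) k = (if k \<le> N then coeff A (N - k) else 0)"
proof -
  have "coeff (poly_reverse N A) k = (\<Sum>i\<le>N. if i = N - k then (if k \<le> N then coeff A i else 0) else 0)"
    unfolding poly_reverse_def coeff_sum coeff_monom by (intro sum.cong) auto
  then show ?thesis by simp
qed

lemma degree_poly_reverse_le: "degree (poly_reverse N A) \<le> N"
  by (rule degree_le) (simp add: coeff_poly_reverse)

lemma poly_reverse_poly_reverse: "degree A \<le> N \<Longrightarrow> poly_reverse N (poly_reverse N A) = A"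
  by (rule poly_eqI) (auto simp: coeff_poly_reverse coeff_eq_0)

lemma map_poly_poly_reverse: "f 0 = 0 \<Longrightarrow> map_poly f (poly_reverse N A) = poly_reverse N (map_poly f A)"
  by (rule poly_eqI) (simp add: coeff_poly_reverse coeff_map_poly)

lemma iota_eq_poly_reverse:
  fixes A :: "'a::field poly"
  assumes "degree A \<le> N"
  shows "iota N A = poly_reverse N A"
  unfolding iota_def poly_reverse_def
  by (rule sum.mono_neutral_left) (auto simp: assms coeff_eq_0)

lemma poly_reverse_eq_monom_mult_reflect_poly:
  assumes "degree A \<le> N"
  shows "poly_reverse N A = monom 1 (N - degree A) * reflect_poly A"
proof (rule poly_eqI)
  fix k
  consider "k < N - degree A" | "N - degree A \<le> k" "k \<le> N" | "N < k" by linarith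
  then show "coeff (poly_reverse N A) k = coeff (monom 1 (N - degree A) * reflect_poly A) k"
  proof cases
    case 1
    then show ?thesis
      using assms by (simp add: coeff_poly_reverse coeff_monom_mult coeff_eq_0)
  next
    case 2
    then have "degree A - (k - (N - degree A)) = N - k"
      using assms by linarith
    with 2 show ?thesis
      using assms by (simp add: coeff_poly_reverse coeff_monom_mult coeff_reflect_poly)
  next
    case 3
    then show ?thesis
      using assms by (simp add: coeff_poly_reverse coeff_monom_mult coeff_reflect_poly)
  qed
qed

lemma poly_reverse_mult:
  fixes A B :: "'a::idom poly"
  assumes "degree A \<le> a" and "degree B \<le> b"
  shows "poly_reverse (a + b) (A * B) = poly_reverse a A * poly_reverse b B"
proof (cases "A = 0 \<or> B = 0")
  case True
  then show ?thesis by (auto simp: poly_reverse_def)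
next
  case False
  then have deg: "degree (A * B) = degree A + degree B"
    by (simp add: degree_mult_eq)
  then have "a + b - degree (A * B) = (a - degree A) + (b - degree B)"
    using assms by simp
  then show ?thesis
    using assms deg
    by (simp add: poly_reverse_eq_monom_mult_reflect_poly reflect_poly_mult mult_monom ac_simps)
qed

lemma poly_reverse_prod:
  fixes F :: "nat \<Rightarrow> 'a::idom poly"
  assumes "\<And>k. k < d \<Longrightarrow> degree (F k) \<le> N"
  shows "poly_reverse (N * d) (\<Prod>k<d. F k) = (\<Prod>k<d. poly_reverse N (F k))"
  using assms
proof (induction d)
  case 0
  show ?case by (rule poly_eqI) (simp add: coeff_poly_reverse)
next
  case (Suc d)
  have "degree (\<Prod>k<d. F k) \<le> N * d"
    using Suc.prems degree_prod_sum_le[of "{..<d}" F] sum_bounded_above[of "{..<d}" "degree \<circ> F" N]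
    by (simp add: mult.commute)
  then have "poly_reverse (N * d + N) ((\<Prod>k<d. F k) * F d)
      = poly_reverse (N * d) (\<Prod>k<d. F k) * poly_reverse N (F d)"
    using Suc.prems by (intro poly_reverse_mult) auto
  then show ?case
    using Suc by (simp add: add.commute)
qed

lemma poly_reverse_power:
  fixes A :: "'a::idom poly"
  assumes "degree A \<le> a"
  shows "poly_reverse (a * n) (A ^ n) = poly_reverse a A ^ n"
  using poly_reverse_prod[of n "\<lambda>_. A" a] assms by simp

lemma poly_poly_reverse_inverse:
  fixes B :: "'a::field poly"
  assumes x: "x \<noteq> 0" and "degree B \<le> N"
  shows "poly (poly_reverse N B) (inverse x) = inverse x ^ N * poly B x"
proof -
  have "inverse x ^ (N - i) = inverse x ^ N * x ^ i" if "i \<le> degree B" for i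
  proof -
    have "inverse x ^ N * x ^ i = inverse x ^ (N - i) * (inverse x * x) ^ i"
      using that assms(2) by (simp add: power_mult_distrib flip: power_add)
    then show ?thesis using x by simp
  qed
  then have "poly (iota N B) (inverse x) = inverse x ^ N * (\<Sum>i\<le>degree B. coeff B i * x ^ i)"
    by (simp add: iota_def poly_sum poly_monom sum_distrib_left ac_simps)
  then show ?thesis
    by (simp add: poly_altdef iota_eq_poly_reverse[OF assms(2), symmetric])
qed

section \<open>The substitution \<open>\<theta> \<mapsto> 1/\<theta>\<close>\<close>

lemma not_dvd_theta_if_not_associated:
  fixes Pr :: "'a::field poly"
  assumes irr: "irreducible Pr" and not_assoc: "\<not> (Pr dvd theta \<and> theta dvd Pr)"
  shows "\<not> Pr dvd theta" and "\<not> theta dvd Pr"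
proof -
  have theta: "irreducible (theta :: 'a poly)"
    by (rule irreducible_linear_field_poly) simp
  show "\<not> Pr dvd theta"
    using irreducibleD'[OF theta] irr not_assoc by (auto simp: irreducible_def)
  show "\<not> theta dvd Pr"
    using irreducibleD'[OF irr] theta not_assoc by (auto simp: irreducible_def)
qed

lemma theta_power_mult_pcompose_iota_cong:
  fixes Pr t p :: "'a::field poly"
  assumes inv: "[theta * t = 1] (mod Pr)" and "degree p \<le> M"
  shows "[theta ^ M * pcompose (iota M p) t = p] (mod Pr)"
proof -
  have "theta ^ M * pcompose (iota M p) t = (\<Sum>i\<le>degree p. [:coeff p i:] * (theta ^ M * t ^ (M - i)))"
    unfolding iota_def pcompose_sum sum_distrib_left
    by (intro sum.cong refl) (simp add: monom_altdef pcompose_smult pcompose_power pcompose_pCons)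
  also have "\<dots> = (\<Sum>i\<le>degree p. [:coeff p i:] * (theta ^ i * (theta * t) ^ (M - i)))"
  proof (rule sum.cong[OF refl])
    fix i assume "i \<in> {..degree p}"
    then have split: "theta ^ M = theta ^ i * theta ^ (M - i)"
      using assms(2) by (simp flip: power_add)
    show "[:coeff p i:] * (theta ^ M * t ^ (M - i))
        = [:coeff p i:] * (theta ^ i * (theta * t) ^ (M - i))"
      unfolding split by (simp only: power_mult_distrib ac_simps)
  qed
  also have "[\<dots> = (\<Sum>i\<le>degree p. [:coeff p i:] * (theta ^ i * 1 ^ (M - i)))] (mod Pr)"
    by (intro cong_sum cong_mult cong_refl cong_pow inv)
  also have "(\<Sum>i\<le>degree p. [:coeff p i:] * (theta ^ i * 1 ^ (M - i))) = p"
    using poly_as_sum_of_monoms[of p] by (simp add: monom_altdef)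
  finally show ?thesis .
qed

lemma pcompose_iota_cong:
  fixes Pr t p :: "'a::field poly"
  assumes inv: "[theta * t = 1] (mod Pr)" and "degree p \<le> M"
  shows "[pcompose (iota M p) t = t ^ M * p] (mod Pr)"
proof -
  have "[(theta * t) ^ M * pcompose (iota M p) t = 1 ^ M * pcompose (iota M p) t] (mod Pr)"
    by (intro cong_mult cong_pow inv cong_refl)
  moreover have "[t ^ M * (theta ^ M * pcompose (iota M p) t) = t ^ M * p] (mod Pr)"
    by (intro cong_mult cong_refl theta_power_mult_pcompose_iota_cong assms)
  ultimately show ?thesis
    by (metis (no_types, lifting) cong_sym cong_trans mult.assoc mult.left_commute
        power_mult_distrib power_one mult_1)
qed

lemma twistQ_iota_cong:
  fixes Pr t P :: "'a::field poly"
  assumes inv: "[theta * t = 1] (mod Pr)" and "degree P \<le> m"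
  shows "cong_coeffs Pr (map_poly (\<lambda>c. pcompose c t) (twistQ (iota m P) n))
           ([:t ^ (m + n):] * ([:P:] * [:- 1, theta:] ^ n))"
proof -
  have "cong_coeffs Pr [:pcompose (iota m P) t:] [:t ^ m * P:]"
    using pcompose_iota_cong[OF assms] by (simp add: cong_coeffs_def cong_iff_dvd_diff)
  moreover have "cong_coeffs Pr [:- t, 1:] ([:t:] * [:- 1, theta:])"
    using inv by (auto simp: cong_coeffs_iff coeff_pCons cong_sym split: nat.split)
  moreover have "pcompose theta t = t"
    by (simp add: pcompose_pCons)
  ultimately have "cong_coeffs Pr (map_poly (\<lambda>c. pcompose c t) (twistQ (iota m P) n))
      ([:t ^ m * P:] * ([:t:] * [:- 1, theta:]) ^ n)"
    unfolding map_poly_twistQ[OF is_ring_hom_pcompose] by (intro cong_coeffs_mult cong_coeffs_power) simp_all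
  moreover have "[:t ^ m * P:] * ([:t:] * [:- 1, theta:]) ^ n = [:t ^ (m + n):] * ([:P:] * [:- 1, theta:] ^ n)"
  proof -
    have "[:t ^ m * P:] = [:t:] ^ m * [:P:]" and "[:t ^ (m + n):] = [:t:] ^ m * [:t:] ^ n"
      by (simp_all add: poly_const_pow power_add)
    then show ?thesis
      by (simp only: power_mult_distrib ac_simps)
  qed
  ultimately show ?thesis by simp
qed

lemma twistQ_reflected:
  fixes P :: "'a::field poly"
  shows "[:P:] * [:- 1, theta:] ^ n = lift_coeffs [:(- 1) ^ n:] * poly_reverse n (twistQ P n)"
proof -
  let ?S = "[:- theta, 1:] :: 'a poly poly"
  have "poly_reverse (0 + 1 * n) ([:P:] * ?S ^ n)
      = poly_reverse 0 [:P:] * poly_reverse (1 * n) (?S ^ n)"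
    by (intro poly_reverse_mult) (simp_all add: degree_linear_power)
  also have "poly_reverse (1 * n) (?S ^ n) = poly_reverse 1 ?S ^ n"
    by (rule poly_reverse_power) simp
  also have "poly_reverse 1 ?S = [:1, - theta:]"
    by (rule poly_eqI) (simp add: coeff_poly_reverse coeff_pCons split: nat.split)
  also have "poly_reverse 0 [:P:] = [:P:]"
    by (simp add: poly_reverse_def monom_0)
  finally have "poly_reverse n (twistQ P n) = [:P:] * [:1, - theta:] ^ n"
    by (simp add: twistQ_def)
  moreover have "lift_coeffs [:(- 1) ^ n:] = (- 1 :: 'a poly poly) ^ n"
    by (simp add: map_poly_pCons poly_const_pow ring_hom_power[OF is_ring_hom_lift_coeffs, symmetric] one_pCons)
  ultimately show ?thesis
    by (simp add: power_mult_distrib[symmetric])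
qed

lemma sum_powers_mult_diff_one:
  assumes "q \<ge> 1"
  shows "(\<Sum>k<d. q ^ k) * (q - 1) = q ^ d - (1 :: nat)"
proof -
  have "int ((\<Sum>k<d. q ^ k) * (q - 1)) = int (q ^ d - 1)"
    using power_diff_1_eq[of "int q" d] assms by (simp add: of_nat_diff mult.commute)
  then show ?thesis by (simp only: of_nat_eq_iff)
qed

lemma frob_norm_const:
  fixes w :: "'a::{finite,field} poly"
  shows "frob_norm d [:w:] = [:w ^ (\<Sum>k<d. CARD('a) ^ k):]"
proof -
  have "frob_norm d [:w:] = (\<Prod>k<d. [:frob k w:])"
    unfolding frob_norm_def by (simp add: map_poly_ring_hom_const[OF is_ring_hom_frob])
  also have "\<dots> = [:\<Prod>k<d. frob k w:]"
    by (rule ring_hom_prod[OF is_ring_hom_const_poly, symmetric])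
  finally show ?thesis
    by (simp add: frob_def power_sum)
qed

lemma degree_twistQ_le: "degree (twistQ P n) \<le> n"
  unfolding twistQ_def
  by (rule order.trans[OF degree_mult_le]) (simp add: degree_linear_power)

lemma degree_frob_norm_le:
  assumes "degree X \<le> n"
  shows "degree (frob_norm d X) \<le> n * d"
proof -
  have "degree (frob_norm d X) \<le> (\<Sum>k<d. degree (map_poly (frob k) X))"
    unfolding frob_norm_def using degree_prod_sum_le[of "{..<d}"] by (simp add: o_def)
  also have "\<dots> \<le> (\<Sum>k<d. n)"
    using assms map_poly_degree_leq order.trans by (intro sum_mono) blast
  finally show ?thesis by (simp add: mult.commute)
qed

lemma degree_Qd_le: "degree (Qd Pr n P) \<le> n * degree Pr"
  unfolding Qd_eq_const_residue_frob_norm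
  using map_poly_degree_leq degree_frob_norm_le[OF degree_twistQ_le] order.trans by blast

lemma frob_norm_poly_reverse:
  assumes "degree X \<le> n"
  shows "frob_norm d (poly_reverse n X) = poly_reverse (n * d) (frob_norm d X)"
proof -
  have "degree (map_poly (frob k) X) \<le> n" for k
    using assms map_poly_degree_leq order.trans by blast
  then show ?thesis
    using poly_reverse_prod[of d "\<lambda>k. map_poly (frob k) X" n] unfolding frob_norm_def
    by (simp add: map_poly_poly_reverse ring_hom_zero[OF is_ring_hom_frob])
qed

lemma degree_iota_self:
  fixes Pr :: "'a::field poly"
  assumes "\<not> theta dvd Pr"
  shows "degree (iota (degree Pr) Pr) = degree Pr"
proof -
  have "coeff (iota (degree Pr) Pr) (degree Pr) \<noteq> 0"
    using assms by (simp add: iota_eq_poly_reverse coeff_poly_reverse dvd_iff_poly_eq_0 poly_0_coeff_0)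
  then show ?thesis
    using degree_poly_reverse_le[of "degree Pr" Pr] le_degree[of "iota (degree Pr) Pr" "degree Pr"]
    by (simp add: iota_eq_poly_reverse)
qed

lemma theta_mult_inverse_cong:
  fixes Pr :: "'a::{finite,field} poly"
  assumes irr: "irreducible Pr" and "\<not> Pr dvd theta"
  shows "[theta * theta ^ (CARD('a) ^ degree Pr - 2) = 1] (mod Pr)"
proof -
  have "2 \<le> CARD('a) ^ degree Pr"
    using card_ge_2[where 'a='a] self_le_power[of "CARD('a)" "degree Pr"] degree_pos_if_irreducible[OF irr]
    by linarith
  then have "Suc (CARD('a) ^ degree Pr - 2) = CARD('a) ^ degree Pr - 1"
    by linarith
  then show ?thesis
    using power_card_degree_minus_one_cong[OF assms] by (simp flip: power_Suc)
qed

lemma not_dvd_if_mult_cong_1: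
  fixes Pr :: "'a::field poly"
  assumes "irreducible Pr" and "[s * t = 1] (mod Pr)"
  shows "\<not> Pr dvd t"
proof
  assume "Pr dvd t"
  then have "Pr dvd 1"
    using cong_dvd_iff[OF assms(2)] dvd_mult by blast
  then show False
    using assms(1) by (simp add: irreducible_def)
qed

lemma Qd_iota_eq_transport:
  fixes Pr t :: "'a::{finite,field} poly"
  assumes irr: "irreducible Pr" and "\<not> theta dvd Pr" and inv: "[theta * t = 1] (mod Pr)"
  shows "Qd (iota (degree Pr) Pr) n P'
           = map_poly (const_residue Pr) (frob_norm (degree Pr) (map_poly (\<lambda>c. pcompose c t) (twistQ P' n)))"
proof (rule Qd_transport[OF irr is_ring_hom_pcompose])
  let ?d = "degree Pr"
  show "degree (iota ?d Pr) = ?d"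
    using assms(2) by (rule degree_iota_self)
  have "[pcompose (iota ?d Pr) t = t ^ ?d * Pr] (mod Pr)"
    by (rule pcompose_iota_cong[OF inv]) simp
  then show "Pr dvd pcompose (iota ?d Pr) t"
    by (simp add: cong_dvd_iff[of _ _ Pr])
  show "z = 0" if "degree z < ?d" and "Pr dvd pcompose z t" for z
  proof -
    define w where "w = poly_reverse (?d - 1) z"
    have deg_w: "degree w \<le> ?d - 1"
      by (simp add: w_def degree_poly_reverse_le)
    have z: "z = iota (?d - 1) w"
      using that(1) deg_w by (simp add: w_def iota_eq_poly_reverse poly_reverse_poly_reverse)
    have "[pcompose z t = t ^ (?d - 1) * w] (mod Pr)"
      unfolding z by (rule pcompose_iota_cong[OF inv deg_w])
    then have "Pr dvd t ^ (?d - 1) * w"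
      using that(2) cong_dvd_iff by blast
    then have "Pr dvd w"
      using not_dvd_if_mult_cong_1[OF irr inv] field_poly_irreducible_imp_prime[OF irr]
        prime_elem_dvd_power by (auto simp: prime_elem_dvd_mult_iff)
    then have "w = 0"
      using degree_pos_if_irreducible[OF irr] deg_w eq_0_if_dvd_degree_less[of w Pr] by simp
    then show "z = 0"
      by (simp add: z iota_def)
  qed
qed simp

lemma cong_coeffs_frob_norm_const_power:
  fixes Pr t :: "'a::{finite,field} poly"
  assumes irr: "irreducible Pr" and t: "\<not> Pr dvd t" and dvd: "(CARD('a) - 1) dvd k"
  shows "cong_coeffs Pr (frob_norm (degree Pr) [:t ^ k:]) 1"
proof -
  obtain s where s: "k = (CARD('a) - 1) * s"
    using dvd by (elim dvdE)
  have "(t ^ k) ^ (\<Sum>j<degree Pr. CARD('a) ^ j) = (t ^ (CARD('a) ^ degree Pr - 1)) ^ s"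
    using sum_powers_mult_diff_one[of "CARD('a)" "degree Pr"] card_ge_2[where 'a='a]
    by (simp add: s ac_simps flip: power_mult)
  also have "[\<dots> = 1 ^ s] (mod Pr)"
    by (intro cong_pow power_card_degree_minus_one_cong[OF irr t])
  finally show ?thesis
    by (simp add: frob_norm_const cong_coeffs_iff coeff_pCons split: nat.split)
qed

text \<open>Since \<open>1/\<theta>\<close> exists modulo \<open>Pr\<close>, the substitution \<open>\<theta> \<mapsto> 1/\<theta>\<close> maps \<open>\<iota>(Pr)\<close> to a multiple of \<open>Pr\<close>.
  The power \<open>(1/\<theta>)\<^sup>m\<^sup>+\<^sup>n\<close> it produces has norm \<open>1\<close> because \<open>q - 1\<close> divides \<open>m + n\<close>.\<close>
lemma Qd_iota:
  fixes Pr P :: "'a::{finite,field} poly"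
  assumes irr: "irreducible Pr" and not_assoc: "\<not> (Pr dvd theta \<and> theta dvd Pr)"
    and deg_P: "degree P \<le> m" and dvd: "(CARD('a) - 1) dvd (m + n)"
  shows "Qd (iota (degree Pr) Pr) n (iota m P)
           = poly_reverse (n * degree Pr) (Qd Pr n P) * [:(- 1) ^ n:] ^ degree Pr"
proof -
  let ?d = "degree Pr" and ?G = "[:P:] * [:- 1, theta:] ^ n"
  define t :: "'a poly" where "t = theta ^ (CARD('a) ^ ?d - 2)"
  have inv: "[theta * t = 1] (mod Pr)"
    unfolding t_def
    by (rule theta_mult_inverse_cong[OF irr not_dvd_theta_if_not_associated(1)[OF irr not_assoc]])
  have "Qd (iota ?d Pr) n (iota m P)
      = map_poly (const_residue Pr) (frob_norm ?d (map_poly (\<lambda>c. pcompose c t) (twistQ (iota m P) n)))"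
    by (rule Qd_iota_eq_transport[OF irr not_dvd_theta_if_not_associated(2)[OF irr not_assoc] inv])
  also have "\<dots> = map_poly (const_residue Pr) (frob_norm ?d ([:t ^ (m + n):] * ?G))"
    by (intro map_poly_const_residue_cong cong_coeffs_frob_norm twistQ_iota_cong inv deg_P)
  also have "\<dots> = map_poly (const_residue Pr) (frob_norm ?d ?G)"
  proof -
    have "cong_coeffs Pr (frob_norm ?d [:t ^ (m + n):] * frob_norm ?d ?G) (1 * frob_norm ?d ?G)"
      by (intro cong_coeffs_mult cong_coeffs_refl cong_coeffs_frob_norm_const_power[OF irr _ dvd]
          not_dvd_if_mult_cong_1[OF irr inv])
    then have "cong_coeffs Pr (frob_norm ?d ([:t ^ (m + n):] * ?G)) (frob_norm ?d ?G)"
      by (simp only: frob_norm_mult mult_1)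
    then show ?thesis
      by (rule map_poly_const_residue_cong)
  qed
  also have "frob_norm ?d ?G
      = poly_reverse (n * ?d) (frob_norm ?d (twistQ P n)) * lift_coeffs ([:(- 1) ^ n:] ^ ?d)"
    unfolding twistQ_reflected frob_norm_mult frob_norm_lift_coeffs frob_norm_poly_reverse[OF degree_twistQ_le]
    by (simp add: mult.commute)
  also have "map_poly (const_residue Pr) \<dots> = poly_reverse (n * ?d) (Qd Pr n P) * [:(- 1) ^ n:] ^ ?d"
    by (simp add: map_poly_const_residue_mult_lift_coeffs map_poly_poly_reverse
        Qd_eq_const_residue_frob_norm)
  finally show ?thesis .
qed

section \<open>Local factors\<close>

lemma is_ring_hom_constfr: "is_ring_hom (constfr :: 'a::field \<Rightarrow> 'a poly fract)"
  unfolding is_ring_hom_def constfr_def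
  by (auto simp: Zero_fract_def One_fract_def one_pCons mult.commute)

definition eval_fract :: "'a::field poly \<Rightarrow> 'a poly fract \<Rightarrow> 'a poly fract" where
  "eval_fract Q x = poly (map_poly constfr Q) x"

lemma eval_fract_mult: "eval_fract (A * B) x = eval_fract A x * eval_fract B x"
  by (simp add: eval_fract_def map_poly_ring_hom_times[OF is_ring_hom_constfr])

lemma eval_fract_power: "eval_fract (A ^ j) x = eval_fract A x ^ j"
  by (simp add: eval_fract_def ring_hom_power[OF is_ring_hom_map_poly[OF is_ring_hom_constfr]] poly_power)

lemma eval_fract_const: "eval_fract [:a:] x = constfr a"
  by (simp add: eval_fract_def map_poly_ring_hom_const[OF is_ring_hom_constfr])

lemma eval_fract_pcompose: "eval_fract (pcompose A r) x = eval_fract A (eval_fract r x)"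
  by (simp add: eval_fract_def map_poly_ring_hom_pcompose[OF is_ring_hom_constfr] poly_pcompose)

lemma eval_fract_linear: "eval_fract [:b, c:] x = constfr b + constfr c * x"
  by (simp add: eval_fract_def map_poly_pCons ring_hom_zero[OF is_ring_hom_constfr])

lemma eval_fract_monom: "eval_fract (monom 1 N) x = x ^ N"
  by (simp add: eval_fract_def map_poly_monom ring_hom_zero[OF is_ring_hom_constfr]
      ring_hom_one[OF is_ring_hom_constfr] poly_monom)

lemma eval_fract_poly_reverse_inverse:
  assumes "degree Q \<le> N" and "x \<noteq> 0"
  shows "eval_fract (poly_reverse N Q) (inverse x) = inverse x ^ N * eval_fract Q x"
  unfolding eval_fract_def map_poly_poly_reverse[of constfr, OF ring_hom_zero[OF is_ring_hom_constfr]]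
  by (rule poly_poly_reverse_inverse[OF assms(2)]) (rule order.trans[OF map_poly_degree_leq assms(1)])

text \<open>Two local factors agree once their single nonzero coefficients in degree \<open>d\<close> agree,
  the coefficient in degree \<open>d j\<close> being its \<open>j\<close>-th power.\<close>
lemma Lsub_eqI:
  assumes deg: "degree Pr' = degree Pr"
    and eq: "eval_fract (Qd Pr' n' P') f' * g' ^ degree Pr = eval_fract (Qd Pr n P) f * g ^ degree Pr"
  shows "Lsub Pr' n' P' f' g' = Lsub Pr n P f g"
proof (rule fps_ext)
  fix i
  show "fps_nth (Lsub Pr' n' P' f' g') i = fps_nth (Lsub Pr n P f g) i"
  proof (cases "degree Pr dvd i")
    case True
    define j where "j = i div degree Pr"
    then have i: "i = degree Pr * j" and j: "(degree Pr * j) div degree Pr = j"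
      using True by simp_all
    have "(eval_fract (Qd Pr' n' P') f' * g' ^ degree Pr) ^ j
        = (eval_fract (Qd Pr n P) f * g ^ degree Pr) ^ j"
      by (simp only: eq)
    with True deg j show ?thesis
      unfolding i eval_fract_def
      by (simp add: Lsub_def fps_subst_TU_def Lfac_def power_mult_distrib power_mult
          ring_hom_power[OF is_ring_hom_map_poly[OF is_ring_hom_constfr]] poly_power)
  next
    case False
    then show ?thesis
      using deg by (simp add: Lsub_def fps_subst_TU_def Lfac_def)
  qed
qed

lemma Lsub_shift:
  fixes Pr P :: "'a::{finite,field} poly"
  assumes "irreducible Pr"
  shows "Lsub (pcompose Pr [:b, 1:]) n (pcompose P [:b, 1:]) (Tfr - constfr b) 1 = Lsub Pr n P Tfr 1"
  by (rule Lsub_eqI)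
    (simp_all add: degree_pcompose Qd_pcompose_affine[OF assms] eval_fract_mult eval_fract_power
      eval_fract_const eval_fract_pcompose eval_fract_linear ring_hom_one[OF is_ring_hom_constfr])

lemma Lsub_scale:
  fixes Pr P :: "'a::{finite,field} poly"
  assumes "irreducible Pr" and c: "c \<noteq> 0"
  shows "Lsub (pcompose Pr [:0, c:]) n (pcompose P [:0, c:]) (constfr (inverse c) * Tfr) (constfr (c ^ n))
           = Lsub Pr n P Tfr 1"
proof (rule Lsub_eqI)
  show "degree (pcompose Pr [:0, c:]) = degree Pr"
    using c by (simp add: degree_pcompose)
  have "constfr c * constfr (inverse c) = (1 :: 'a poly fract)"
    using c by (simp add: ring_hom_one[OF is_ring_hom_constfr] flip: ring_hom_times[OF is_ring_hom_constfr])
  then have scale: "constfr c * (constfr (inverse c) * Tfr) = Tfr"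
    by (simp flip: mult.assoc)
  have factor: "constfr (inverse c ^ n) ^ degree Pr * constfr (c ^ n) ^ degree Pr = (1 :: 'a poly fract)"
    using c by (simp add: ring_hom_one[OF is_ring_hom_constfr] power_mult_distrib
        flip: ring_hom_times[OF is_ring_hom_constfr] power_mult_distrib)
  show "eval_fract (Qd (pcompose Pr [:0, c:]) n (pcompose P [:0, c:])) (constfr (inverse c) * Tfr)
      * constfr (c ^ n) ^ degree Pr = eval_fract (Qd Pr n P) Tfr * 1 ^ degree Pr"
    unfolding Qd_pcompose_affine[OF assms] eval_fract_mult eval_fract_pcompose eval_fract_linear
      eval_fract_const eval_fract_power ring_hom_zero[OF is_ring_hom_constfr] scale
    by (simp add: mult.assoc factor)
qed

lemma Lsub_iota:
  fixes Pr P :: "'a::{finite,field} poly"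
  assumes irr: "irreducible Pr" and not_assoc: "\<not> (Pr dvd theta \<and> theta dvd Pr)"
    and deg_P: "degree P \<le> m" and m: "[int m = - int n] (mod (int CARD('a) - 1))"
  shows "Lsub (iota (degree Pr) Pr) n (iota m P) (inverse Tfr) ((- Tfr) ^ n) = Lsub Pr n P Tfr 1"
proof (rule Lsub_eqI)
  let ?d = "degree Pr" and ?T = "Tfr :: 'a poly fract"
  have "int (CARD('a) - 1) dvd int (m + n)"
    using m card_ge_2[where 'a='a] by (simp add: cong_iff_dvd_diff of_nat_diff)
  then have dvd: "(CARD('a) - 1) dvd (m + n)"
    by (simp only: int_dvd_int_iff)
  show "degree (iota ?d Pr) = ?d"
    using not_dvd_theta_if_not_associated(2)[OF irr not_assoc] by (rule degree_iota_self)
  have T: "?T \<noteq> 0"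
    by (simp add: Tfr_def Zero_fract_def eq_fract)
  have sign: "constfr ((- 1) ^ n) ^ ?d = ((- 1) ^ n) ^ ?d"
    by (simp add: ring_hom_power[OF is_ring_hom_constfr] ring_hom_uminus[OF is_ring_hom_constfr]
        ring_hom_one[OF is_ring_hom_constfr])
  have minus: "((- ?T) ^ n) ^ ?d = ((- 1) ^ n) ^ ?d * ?T ^ (n * ?d)"
    by (simp add: power_minus[of ?T] power_mult_distrib power_mult)
  have "eval_fract (Qd (iota ?d Pr) n (iota m P)) (inverse ?T) * ((- ?T) ^ n) ^ ?d
      = (inverse ?T ^ (n * ?d) * ?T ^ (n * ?d)) * (((- 1) ^ n) ^ ?d * ((- 1) ^ n) ^ ?d)
          * eval_fract (Qd Pr n P) ?T"
    unfolding Qd_iota[OF irr not_assoc deg_P dvd] eval_fract_mult eval_fract_power eval_fract_const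
      eval_fract_poly_reverse_inverse[OF degree_Qd_le T] sign minus
    by (simp only: ac_simps)
  also have "\<dots> = eval_fract (Qd Pr n P) ?T * 1 ^ ?d"
    using T by (simp flip: power_mult_distrib)
  finally show "eval_fract (Qd (iota ?d Pr) n (iota m P)) (inverse ?T) * ((- ?T) ^ n) ^ ?d
      = eval_fract (Qd Pr n P) ?T * 1 ^ ?d" .
qed

lemma Lsub_smult_inverse:
  fixes Pr P :: "'a::{finite,field} poly"
  assumes e: "e \<noteq> 0"
  shows "Lsub Pr n (smult (inverse e) P) Tfr (constfr e) = Lsub Pr n P Tfr 1"
proof (rule Lsub_eqI)
  have "constfr (inverse e) ^ degree Pr * constfr e ^ degree Pr = 1"
    using e by (simp add: ring_hom_one[OF is_ring_hom_constfr]
        flip: ring_hom_times[OF is_ring_hom_constfr] power_mult_distrib)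
  then show "eval_fract (Qd Pr n (smult (inverse e) P)) Tfr * constfr e ^ degree Pr
      = eval_fract (Qd Pr n P) Tfr * 1 ^ degree Pr"
    by (simp add: Qd_smult eval_fract_mult eval_fract_power eval_fract_const mult.assoc)
qed simp

lemma Lsub_CARD_power_mult:
  fixes Pr P :: "'a::{finite,field} poly"
  assumes "irreducible Pr"
  shows "Lsub Pr (CARD('a) ^ k * n) P Tfr 1 = Lsub Pr n P (Tfr ^ (CARD('a) ^ k)) 1"
  by (rule Lsub_eqI) (simp_all add: Qd_CARD_power_mult[OF assms] eval_fract_pcompose eval_fract_monom)

theorem lemma2p2:
  fixes P Pr :: "'a::{finite,field} poly" and n :: nat
  assumes "n \<ge> 1" and "P \<noteq> 0" and "irreducible Pr"
  shows
   "(\<forall>b::'a. Lsub (pcompose Pr [:b, 1:]) n (pcompose P [:b, 1:]) (Tfr - constfr b) 1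
              = Lsub Pr n P Tfr 1)
  \<and> (\<forall>c::'a. c \<noteq> 0 \<longrightarrow>
        Lsub (pcompose Pr [:0, c:]) n (pcompose P [:0, c:]) (constfr (inverse c) * Tfr) (constfr (c ^ n))
              = Lsub Pr n P Tfr 1)
  \<and> (\<forall>m::nat. \<not> (Pr dvd [:0, 1:] \<and> [:0, 1:] dvd Pr) \<and> m \<ge> degree P
        \<and> [int m = - int n] (mod (int CARD('a) - 1)) \<longrightarrow>
        Lsub (iota (degree Pr) Pr) n (iota m P) (inverse Tfr) ((- Tfr) ^ n)
              = Lsub Pr n P Tfr 1)
  \<and> (\<forall>(emb :: 'a \<Rightarrow> 'b::field) (c :: 'b) (e :: 'a). is_field_hom emb \<and> e \<noteq> 0 \<and> c ^ n = emb e \<longrightarrow>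
        Lsub Pr n (smult (inverse e) P) Tfr (constfr e) = Lsub Pr n P Tfr 1)
  \<and> (\<forall>k::nat. Lsub Pr (CARD('a) ^ k * n) P Tfr 1 = Lsub Pr n P (Tfr ^ (CARD('a) ^ k)) 1)"
  \<comment> \<open>Only \<open>e = c\<^sup>n\<close> enters the fourth identity.\<close>
  using Lsub_shift[OF assms(3)] Lsub_scale[OF assms(3)] Lsub_iota[OF assms(3)]
    Lsub_smult_inverse Lsub_CARD_power_mult[OF assms(3)]
  by blast

end
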